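(* Let $k\ge4$ be an integer. In each of the cases (C1) $\eta\in[\pi/k,\eta_k)$ and $j\in\{k+1,\dots,2k-3\}$, and (C2) $\eta\in[\eta_{k+1},\pi/k)$ and $j\in\{k+1,\dots,2k-1\}$, we have $z_j\in\mathrm{co}(\{0,z_{j-1},w_1,1\})$ and $w_j\in\mathrm{co}(\{1,w_{j-1},b_0,a\})$.
   Context: For $\eta\in(0,\pi/3)$ let $a=\frac{e^{-i\eta}}{2\cos\eta}$, $c=\frac{1}{1-|a|^4}$, and for integers $j\ge0$ put $z_j=ca^{j+1}$, $w_j=1-c|a|^2a^j$, $b_0=a+c|a|^4$. For integers $k\ge1$ let $\Phi_k(\eta)=(1-|a|^4)\sin((k-1)\eta)-|a|^3\sin((k-2)\eta)+|a|^k\sin\eta$; for each $k\ge4$, $\Phi_k$ has a unique zero in $(\pi/k,\pi/(k-1))$, denoted $\eta_k$. $\mathrm{co}$ denotes convex hull. *)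

theory Defs
  imports "HOL-Analysis.Analysis"
begin

definition aa :: "real \<Rightarrow> complex" where
  "aa \<eta> = exp (- \<i> * complex_of_real \<eta>) / complex_of_real (2 * cos \<eta>)"

definition cc :: "real \<Rightarrow> real" where
  "cc \<eta> = 1 / (1 - cmod (aa \<eta>) ^ 4)"

definition zz :: "real \<Rightarrow> nat \<Rightarrow> complex" where
  "zz \<eta> j = complex_of_real (cc \<eta>) * aa \<eta> ^ (j + 1)"

definition ww :: "real \<Rightarrow> nat \<Rightarrow> complex" where
  "ww \<eta> j = 1 - complex_of_real (cc \<eta> * cmod (aa \<eta>) ^ 2) * aa \<eta> ^ j"

definition bb0 :: "real \<Rightarrow> complex" where
  "bb0 \<eta> = aa \<eta> + complex_of_real (cc \<eta> * cmod (aa \<eta>) ^ 4)"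

definition Phi :: "nat \<Rightarrow> real \<Rightarrow> real" where
  "Phi k \<eta> = (1 - cmod (aa \<eta>) ^ 4) * sin ((real k - 1) * \<eta>)
              - cmod (aa \<eta>) ^ 3 * sin ((real k - 2) * \<eta>)
              + cmod (aa \<eta>) ^ k * sin \<eta>"

definition eta_k :: "nat \<Rightarrow> real" where
  "eta_k k = (THE \<eta>. \<eta> \<in> {pi / real k <..< pi / (real k - 1)} \<and> Phi k \<eta> = 0)"

end

theory Submission
  imports Defs
begin

text \<open>
  Write \<open>a = r e\<^sup>-\<^sup>i\<^sup>\<eta>\<close> with \<open>r = 1 / (2 cos \<eta>)\<close>. The affine map \<open>y \<mapsto> 1 - cnj a * y\<close> sends
  \<open>0, z\<^sub>j\<^sub>-\<^sub>1, w\<^sub>1, 1, z\<^sub>j\<close> to \<open>1, w\<^sub>j\<^sub>-\<^sub>1, b\<^sub>0, a, w\<^sub>j\<close>, so only the claim about \<open>z\<^sub>j\<close> needs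
  proof. The point \<open>z\<^sub>j\<close> lies in the quadrilateral \<open>0, z\<^sub>j\<^sub>-\<^sub>1, w\<^sub>1, 1\<close> if it lies on the inner
  side of its edges; computing the orientations in polar form, this reduces to
  \<open>sin ((j+1)\<eta>) \<le> 0\<close>, \<open>\<Theta>\<^sub>j(\<eta>) \<ge> 0\<close> and \<open>\<Psi>\<^sub>j(\<eta>) \<le> 0\<close>, where \<open>\<Psi>\<^sub>j = \<Phi>\<^sub>j\<close>.
  For \<open>\<eta> \<le> \<pi>/4\<close> we have \<open>r\<^sup>2 \<le> 1/2\<close>, so \<open>\<Theta>\<^sub>j \<ge> 0\<close> follows from \<open>\<bar>sin (j\<eta>)\<bar> \<le> j sin \<eta>\<close>
  and \<open>j r\<^sup>j\<^sup>+\<^sup>1 \<le> 3/4\<close>, while \<open>\<Psi>\<^sub>j \<le> 0\<close> holds as soon as \<open>\<pi> \<le> (j-1)\<eta>\<close> and \<open>(j+1)\<eta> < 2\<pi>\<close>.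
  This covers everything except \<open>j = k+1\<close> in (C2) and \<open>k = 4\<close>. For the former,
  \<open>\<Psi>\<^sub>m / (r\<^sup>3 sin \<eta>)\<close> is strictly decreasing on \<open>[\<pi>/m, \<pi>/(m-1)]\<close>; this makes \<open>\<eta>\<^sub>m\<close> well
  defined for \<open>m \<ge> 5\<close> and gives \<open>\<Psi>\<^sub>m \<le> 0\<close> to its right. For \<open>k = 4\<close> (so \<open>j = 5\<close> and
  \<open>\<eta> \<in> [\<pi>/4, \<eta>\<^sub>4)\<close>), \<open>\<eta>\<^sub>4\<close> is the point where \<open>r\<^sup>4 = 1/2\<close>, and both conditions become
  polynomial inequalities in \<open>r\<^sup>2 \<in> [1/2, 1/\<surd>2)\<close>.
\<close>

section \<open>Orientation and convex hulls\<close>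

text \<open>\<open>wedge u v\<close> is positive iff \<open>v\<close> lies counter-clockwise from \<open>u\<close>.\<close>

definition wedge :: "complex \<Rightarrow> complex \<Rightarrow> real" where
  "wedge u v = Im (cnj u * v)"

lemma wedge_diff_left: "wedge (u - v) w = wedge u w - wedge v w"
  by (simp add: wedge_def algebra_simps)

lemma wedge_diff_right: "wedge w (u - v) = wedge w u - wedge w v"
  by (simp add: wedge_def algebra_simps)

lemma wedge_minus_left: "wedge (- u) v = - wedge u v"
  by (simp add: wedge_def)

lemma wedge_one_left: "wedge 1 v = Im v"
  by (simp add: wedge_def)

lemma wedge_self [simp]: "wedge u u = 0"
  by (simp add: wedge_def algebra_simps)

lemma wedge_translate: "wedge (u - w) (v - w) = wedge u v + wedge w u - wedge w v"
  by (simp add: wedge_def algebra_simps)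

lemma wedge_rcis: "wedge (rcis x a) (rcis y b) = x * y * sin (b - a)"
  by (simp add: wedge_def rcis_def sin_diff algebra_simps)

lemma in_convex_hull_triangleI:
  fixes A B C p :: complex
  assumes pos: "wedge (B - A) (C - A) > 0"
    and AB: "wedge (B - A) (p - A) \<ge> 0" and BC: "wedge (C - B) (p - B) \<ge> 0"
    and CA: "wedge (A - C) (p - C) \<ge> 0"
  shows "p \<in> convex hull {A, B, C}"
proof -
  define d where "d = wedge (B - A) (C - A)"
  define u v w where "u = wedge (C - B) (p - B) / d" and "v = wedge (A - C) (p - C) / d"
    and "w = wedge (B - A) (p - A) / d"
  have d: "d > 0" using pos by (simp add: d_def)
  have "wedge (C - B) (p - B) + wedge (A - C) (p - C) + wedge (B - A) (p - A) = d"
    by (simp add: d_def wedge_def algebra_simps)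
  then have sum: "u + v + w = 1"
    using d by (simp add: u_def v_def w_def add_divide_distrib[symmetric])
  have "of_real d * p = of_real (wedge (C - B) (p - B)) * A + of_real (wedge (A - C) (p - C)) * B
      + of_real (wedge (B - A) (p - A)) * C"
    by (intro complex_eqI) (simp_all add: d_def wedge_def algebra_simps)
  then have "p = u *\<^sub>R A + v *\<^sub>R B + w *\<^sub>R C"
    using d by (simp add: u_def v_def w_def scaleR_conv_of_real field_simps)
  moreover have "u \<ge> 0" "v \<ge> 0" "w \<ge> 0"
    using d AB BC CA by (simp_all add: u_def v_def w_def)
  ultimately show ?thesis
    using sum unfolding convex_hull_3 by blast
qed

text \<open>\<open>Z\<close> lies in the triangle \<open>0, W, P\<close> or in the triangle \<open>0, 1, W\<close>, according to the
  side of the diagonal \<open>[0, W]\<close> on which it lies.\<close>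

lemma in_convex_hull_quadrilateralI:
  fixes P W Z :: complex
  assumes PZ: "wedge P Z < 0" and W: "Im W > 0" and Z: "Im Z \<ge> 0"
    and W1: "wedge (W - 1) (Z - 1) \<ge> 0" and PW: "wedge (P - W) (Z - W) \<ge> 0"
  shows "Z \<in> convex hull {0, P, W, 1}"
proof (cases "wedge W Z \<ge> 0")
  case True
  have "wedge W P = wedge (P - W) (Z - W) - wedge P Z + wedge W Z"
    by (simp add: wedge_translate)
  then have "wedge (W - 0) (P - 0) > 0"
    using PZ PW True by simp
  then have "Z \<in> convex hull {0, W, P}"
    by (rule in_convex_hull_triangleI)
      (use True PW PZ in \<open>simp_all add: wedge_minus_left wedge_diff_right\<close>)
  then show ?thesis
    by (rule rev_subsetD[OF _ hull_mono]) auto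
next
  case False
  have "wedge (1 - 0) (W - 0) > 0"
    using W by (simp add: wedge_one_left)
  then have "Z \<in> convex hull {0, 1, W}"
    by (rule in_convex_hull_triangleI)
      (use False Z W1 in \<open>simp_all add: wedge_one_left wedge_minus_left wedge_diff_right\<close>)
  then show ?thesis
    by (rule rev_subsetD[OF _ hull_mono]) auto
qed

lemma convex_hull_complex_affinity:
  fixes a c :: complex
  shows "convex hull ((\<lambda>x. a + c * x) ` S) = (\<lambda>x. a + c * x) ` (convex hull S)"
proof -
  have "linear (\<lambda>x. c * x)"
    by (simp add: linear_iff algebra_simps)
  then have "convex hull ((\<lambda>x. a + x) ` (\<lambda>x. c * x) ` S) = (\<lambda>x. a + x) ` (\<lambda>x. c * x) ` (convex hull S)"
    by (simp add: convex_hull_translation convex_hull_linear_image)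
  then show ?thesis
    by (simp add: image_image)
qed

section \<open>The points in polar form\<close>

definition abs_a :: "real \<Rightarrow> real" where
  "abs_a t = 1 / (2 * cos t)"

lemma aa_power: "aa t ^ n = rcis (abs_a t ^ n) (- (real n * t))"
proof -
  have "aa t = rcis (abs_a t) (- t)"
    by (simp add: aa_def abs_a_def rcis_def cis_conv_exp field_simps)
  then show ?thesis
    by (simp add: DeMoivre2)
qed

lemma norm_aa: "cos t > 0 \<Longrightarrow> cmod (aa t) = abs_a t"
  using aa_power[of t 1] by (simp add: abs_a_def)

lemma zz_polar: "zz t j = rcis (cc t * abs_a t ^ (j + 1)) (- ((real j + 1) * t))"
  unfolding zz_def aa_power by (simp add: rcis_def add.commute)

lemma ww_polar:
  "cos t > 0 \<Longrightarrow> ww t j = 1 - rcis (cc t * abs_a t ^ (j + 2)) (- (real j * t))"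
  unfolding ww_def aa_power by (simp add: norm_aa rcis_def power_add power2_eq_square)

lemma aa_eq_one_minus_cnj: "cos t \<noteq> 0 \<Longrightarrow> aa t = 1 - cnj (aa t)"
  using aa_power[of t 1] by (intro complex_eqI) (simp_all add: abs_a_def)

lemma cnj_mult_self: "cnj z * z = of_real (cmod z ^ 2)"
  by (metis complex_norm_square mult.commute of_real_power)

lemma ww_eq_affinity_zz: "ww t j = 1 - cnj (aa t) * zz t j"
proof -
  have "cnj (aa t) * zz t j = of_real (cc t) * (cnj (aa t) * aa t) * aa t ^ j"
    by (simp add: zz_def mult_ac)
  also have "\<dots> = of_real (cc t * cmod (aa t) ^ 2) * aa t ^ j"
    by (simp add: cnj_mult_self)
  finally show ?thesis
    by (simp add: ww_def)
qed

lemma bb0_eq_affinity_ww: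
  assumes "cos t \<noteq> 0" shows "bb0 t = 1 - cnj (aa t) * ww t 1"
proof -
  have "cnj (aa t) * ww t 1 = cnj (aa t) - of_real (cc t * cmod (aa t) ^ 4)"
    using cnj_mult_self[of "aa t"] by (simp add: ww_def algebra_simps power4_eq_xxxx power2_eq_square)
  then show ?thesis
    using aa_eq_one_minus_cnj[OF assms] by (simp add: bb0_def)
qed

lemma ww_in_convex_hull:
  assumes "cos t \<noteq> 0" and "zz t j \<in> convex hull {0, zz t (j - 1), ww t 1, 1}"
  shows "ww t j \<in> convex hull {1, ww t (j - 1), bb0 t, aa t}"
proof -
  define T where "T = (\<lambda>y. 1 + (- cnj (aa t)) * y)"
  have "T (zz t j) \<in> convex hull (T ` {0, zz t (j - 1), ww t 1, 1})"
    using assms(2) unfolding T_def convex_hull_complex_affinity by blast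
  moreover have "T ` {0, zz t (j - 1), ww t 1, 1} = {1, ww t (j - 1), bb0 t, aa t}"
    using aa_eq_one_minus_cnj[OF assms(1)] bb0_eq_affinity_ww[OF assms(1)]
    by (simp add: T_def ww_eq_affinity_zz)
  ultimately show ?thesis
    by (simp add: T_def ww_eq_affinity_zz)
qed

lemma abs_a_strict_mono:
  assumes "0 \<le> s" "s < t" "t < pi / 2"
  shows "abs_a s < abs_a t"
proof -
  have "0 < cos t" using assms by (intro cos_gt_zero_pi) auto
  moreover have "cos t < cos s" using assms by (intro cos_monotone_0_pi) auto
  ultimately show ?thesis
    unfolding abs_a_def by (simp add: divide_strict_left_mono)
qed

lemma abs_a_mono: "0 \<le> s \<Longrightarrow> s \<le> t \<Longrightarrow> t < pi / 2 \<Longrightarrow> abs_a s \<le> abs_a t"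
  using abs_a_strict_mono[of s t] by (cases "s = t") auto

lemma abs_a_ge_half: "0 \<le> t \<Longrightarrow> t < pi / 2 \<Longrightarrow> 1 / 2 \<le> abs_a t"
  using abs_a_mono[of 0 t] by (simp add: abs_a_def)

lemma abs_a_pi_div_3 [simp]: "abs_a (pi / 3) = 1"
  by (simp add: abs_a_def cos_60)

lemma abs_a_pi_div_4_sq [simp]: "abs_a (pi / 4) ^ 2 = 1 / 2"
  by (simp add: abs_a_def cos_45 power_divide)

lemma bounds_below_pi_div_3:
  assumes "0 < t" "t < pi / 3"
  shows "cos t > 0" "sin t > 0" "abs_a t > 0" "abs_a t < 1"
proof -
  show "cos t > 0" "sin t > 0"
    using assms by (auto intro: cos_gt_zero_pi sin_gt_zero)
  show "abs_a t > 0"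
    using abs_a_ge_half[of t] assms by simp
  show "abs_a t < 1"
    using abs_a_strict_mono[of t "pi / 3"] assms by simp
qed

lemma abs_a_sq_le_half:
  assumes "0 \<le> t" "t \<le> pi / 4"
  shows "abs_a t ^ 2 \<le> 1 / 2"
proof -
  have "abs_a t ^ 2 \<le> abs_a (pi / 4) ^ 2"
    using assms abs_a_mono[of t "pi / 4"] abs_a_ge_half[of t] pi_gt_zero by (intro power_mono) auto
  then show ?thesis by simp
qed

lemma abs_a_sq_ge_half:
  assumes "pi / 4 \<le> t" "t < pi / 2"
  shows "1 / 2 \<le> abs_a t ^ 2"
proof -
  have "abs_a (pi / 4) ^ 2 \<le> abs_a t ^ 2"
    using assms abs_a_mono[of "pi / 4" t] abs_a_ge_half[of "pi / 4"] by (intro power_mono) auto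
  then show ?thesis by simp
qed

lemma sin_mult_recurrence:
  fixes x t :: real
  shows "sin ((x + 1) * t) + sin ((x - 1) * t) = 2 * cos t * sin (x * t)"
  by (simp add: distrib_right left_diff_distrib sin_add sin_diff)

lemma zz_ww_wedges:
  assumes "cos t > 0" "j \<ge> 1"
  defines "c \<equiv> cc t" and "r \<equiv> abs_a t"
  shows "wedge (zz t (j - 1)) (zz t j) = - (c * r ^ j * (c * r ^ (j + 1)) * sin t)"
    and "wedge (ww t 1) (zz t (j - 1))
      = c ^ 2 * r ^ (j + 3) * sin ((real j - 1) * t) - c * r ^ j * sin (real j * t)"
    and "wedge (ww t 1) (zz t j)
      = c ^ 2 * r ^ (j + 4) * sin (real j * t) - c * r ^ (j + 1) * sin ((real j + 1) * t)"
    and "Im (ww t 1) = c * r ^ 3 * sin t"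
    and "Im (zz t j) = - (c * r ^ (j + 1) * sin ((real j + 1) * t))"
proof -
  have Z: "zz t j = rcis (c * r ^ (j + 1)) (- ((real j + 1) * t))"
    by (simp add: zz_polar r_def c_def)
  have P: "zz t (j - 1) = rcis (c * r ^ j) (- (real j * t))"
    using assms(2) by (simp add: zz_polar r_def c_def)
  have W: "ww t 1 = 1 - rcis (c * r ^ 3) (- t)"
    using assms(1) by (simp add: ww_polar r_def c_def power3_eq_cube mult.assoc)
  have angles: "- ((real j + 1) * t) - - (real j * t) = - t"
    "- (real j * t) - - t = - ((real j - 1) * t)" "- ((real j + 1) * t) - - t = - (real j * t)"
    by (simp_all add: algebra_simps)
  show "wedge (zz t (j - 1)) (zz t j) = - (c * r ^ j * (c * r ^ (j + 1)) * sin t)"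
    unfolding P Z wedge_rcis angles by simp
  show "wedge (ww t 1) (zz t (j - 1))
      = c ^ 2 * r ^ (j + 3) * sin ((real j - 1) * t) - c * r ^ j * sin (real j * t)"
    unfolding W P wedge_diff_left wedge_one_left wedge_rcis angles Im_rcis sin_minus
    by (simp add: power_add power2_eq_square algebra_simps del: mult_minus_left)
  show "wedge (ww t 1) (zz t j)
      = c ^ 2 * r ^ (j + 4) * sin (real j * t) - c * r ^ (j + 1) * sin ((real j + 1) * t)"
    unfolding W Z wedge_diff_left wedge_one_left wedge_rcis angles Im_rcis sin_minus
    by (simp add: power_add power2_eq_square power3_eq_cube power4_eq_xxxx algebra_simps)
  show "Im (ww t 1) = c * r ^ 3 * sin t" "Im (zz t j) = - (c * r ^ (j + 1) * sin ((real j + 1) * t))"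
    unfolding W Z by simp_all
qed

text \<open>Up to positive factors, \<open>Theta j t\<close> and \<open>- Psi j t\<close> are the orientations of \<open>z\<^sub>j\<close>
  with respect to the edges \<open>[w\<^sub>1, 1]\<close> and \<open>[z\<^sub>j\<^sub>-\<^sub>1, w\<^sub>1]\<close> of the quadrilateral.\<close>

definition Theta :: "nat \<Rightarrow> real \<Rightarrow> real" where
  "Theta j t = abs_a t ^ (j + 1) * sin (real j * t) + (1 - abs_a t ^ 4) * sin t"

definition Psi :: "nat \<Rightarrow> real \<Rightarrow> real" where
  "Psi j t = (1 - abs_a t ^ 2 - abs_a t ^ 4) * sin ((real j - 1) * t)
     + abs_a t ^ 3 * sin (real j * t) + abs_a t ^ j * sin t"

lemma zz_ww_edge_wedges:
  assumes "cos t > 0" "cc t * (1 - abs_a t ^ 4) = 1" "j \<ge> 1"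
  defines "c \<equiv> cc t" and "r \<equiv> abs_a t"
  shows "wedge (ww t 1 - 1) (zz t j - 1) = c ^ 2 * r ^ 3 * Theta j t"
    and "wedge (zz t (j - 1) - ww t 1) (zz t j - ww t 1) = - (c ^ 2 * r ^ (j + 1) * Psi j t)"
proof -
  define X Y R where "X = sin ((real j - 1) * t)" and "Y = sin (real j * t)" and "R = r ^ j"
  note wedges = zz_ww_wedges[OF assms(1,3), folded c_def r_def]
  have c: "c * (1 - r ^ 4) = 1"
    using assms(2) by (simp add: c_def r_def)
  have sin_succ: "r * sin ((real j + 1) * t) = Y - r * X"
    using sin_mult_recurrence[of "real j" t] assms(1)
    by (simp add: X_def Y_def r_def abs_a_def field_simps)
  have "wedge (ww t 1 - 1) (zz t j - 1) = wedge (ww t 1) (zz t j) + Im (ww t 1) - Im (zz t j)"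
    unfolding wedge_translate wedge_one_left ..
  also have "\<dots> = c ^ 2 * r ^ 3 * Theta j t"
    unfolding wedges Theta_def r_def[symmetric] Y_def[symmetric] power_add using c by algebra
  finally show "wedge (ww t 1 - 1) (zz t j - 1) = c ^ 2 * r ^ 3 * Theta j t" .
  have "wedge (zz t (j - 1) - ww t 1) (zz t j - ww t 1)
      = wedge (zz t (j - 1)) (zz t j) + wedge (ww t 1) (zz t (j - 1)) - wedge (ww t 1) (zz t j)"
    by (rule wedge_translate)
  also have "\<dots> = - (c ^ 2 * r ^ (j + 1) * Psi j t)"
    unfolding wedges Psi_def r_def[symmetric] X_def[symmetric] Y_def[symmetric] power_add
      R_def[symmetric]
    using c sin_succ by algebra
  finally show "wedge (zz t (j - 1) - ww t 1) (zz t j - ww t 1) = - (c ^ 2 * r ^ (j + 1) * Psi j t)" .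
qed

lemma zz_in_convex_hull:
  assumes t: "0 < t" "t < pi / 3" and j: "j \<ge> 1"
    and "sin ((real j + 1) * t) \<le> 0" "Theta j t \<ge> 0" "Psi j t \<le> 0"
  shows "zz t j \<in> convex hull {0, zz t (j - 1), ww t 1, 1}"
proof -
  note bounds = bounds_below_pi_div_3[OF t]
  have "abs_a t ^ 4 < 1"
    using bounds power_strict_mono[of "abs_a t" 1 4] by simp
  then have c: "cc t * (1 - abs_a t ^ 4) = 1" "cc t > 0"
    using bounds by (simp_all add: cc_def norm_aa)
  show ?thesis
    using zz_ww_wedges[OF bounds(1) j] zz_ww_edge_wedges[OF bounds(1) c(1) j] bounds c assms
    by (intro in_convex_hull_quadrilateralI) (simp_all add: mult_nonneg_nonpos)
qed

lemma Phi_eq_Psi: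
  assumes "cos t > 0"
  shows "Phi m t = Psi m t"
proof -
  have "sin ((real m - 2) * t) = 2 * cos t * sin ((real m - 1) * t) - sin (real m * t)"
    using sin_mult_recurrence[of "real m - 1" t] by (simp add: algebra_simps)
  moreover have "abs_a t ^ 3 * (2 * cos t) = abs_a t ^ 2"
    using assms by (simp add: abs_a_def power3_eq_cube power2_eq_square)
  ultimately have "abs_a t ^ 3 * sin ((real m - 2) * t)
      = abs_a t ^ 2 * sin ((real m - 1) * t) - abs_a t ^ 3 * sin (real m * t)"
    by (metis mult.assoc right_diff_distrib)
  then show ?thesis
    using assms by (simp add: Phi_def Psi_def norm_aa algebra_simps)
qed

lemma zz_ww_in_convex_hulls:
  assumes "0 < t" "t < pi / 3" "j \<ge> 1"
    and "sin ((real j + 1) * t) \<le> 0" "Theta j t \<ge> 0" "Psi j t \<le> 0"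
  shows "zz t j \<in> convex hull {0, zz t (j - 1), ww t 1, 1}
       \<and> ww t j \<in> convex hull {1, ww t (j - 1), bb0 t, aa t}"
  using zz_in_convex_hull[OF assms] ww_in_convex_hull bounds_below_pi_div_3(1)[OF assms(1,2)] by simp

section \<open>Sign conditions for \<open>\<eta> \<le> \<pi>/4\<close>\<close>

lemma abs_sin_mult_le: "\<bar>sin (real n * x)\<bar> \<le> real n * \<bar>sin x\<bar>"
proof (induction n)
  case 0
  then show ?case by simp
next
  case (Suc n)
  have "\<bar>sin (real (Suc n) * x)\<bar> = \<bar>sin (real n * x) * cos x + cos (real n * x) * sin x\<bar>"
    by (simp add: distrib_right sin_add algebra_simps)
  also have "\<dots> \<le> \<bar>sin (real n * x)\<bar> * \<bar>cos x\<bar> + \<bar>cos (real n * x)\<bar> * \<bar>sin x\<bar>"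
    by (simp add: abs_mult[symmetric] abs_triangle_ineq)
  also have "\<dots> \<le> \<bar>sin (real n * x)\<bar> + \<bar>sin x\<bar>"
    by (intro add_mono) (auto intro: mult_left_le mult_left_le_one_le simp: abs_cos_le_one)
  also have "\<dots> \<le> real (Suc n) * \<bar>sin x\<bar>"
    using Suc.IH by (simp add: algebra_simps)
  finally show ?case .
qed

lemma power4_le_quarter:
  fixes r :: real
  assumes "0 \<le> r" "r ^ 2 \<le> 1 / 2"
  shows "r ^ 4 \<le> 1 / 4"
proof -
  have "r ^ 2 * r ^ 2 \<le> 1 / 2 * (1 / 2)"
    using assms by (intro mult_mono) auto
  then show ?thesis
    by (simp add: power2_eq_square power4_eq_xxxx)
qed

lemma of_nat_mult_power_le:
  fixes r :: real
  assumes r: "0 \<le> r" "r ^ 2 \<le> 1 / 2"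
  shows "real n * r ^ (n + 1) \<le> 3 / 4"
proof (induction n rule: less_induct)
  case (less n)
  show ?case
  proof (cases "n < 4")
    case True
    have "r \<le> 3 / 4"
      using power2_le_imp_le[of r "3 / 4"] r by (simp add: power2_eq_square)
    then have "r * r ^ 2 \<le> 3 / 4 * (1 / 2)"
      using r by (intro mult_mono) auto
    then have "r ^ 3 \<le> 3 / 8"
      by (simp add: power2_eq_square power3_eq_cube)
    consider "n = 0" | "n = 1" | "n = 2" | "n = 3"
      using True by linarith
    then show ?thesis
      using r \<open>r ^ 3 \<le> 3 / 8\<close> power4_le_quarter[OF r] by cases (simp_all add: power2_eq_square)
  next
    case False
    define m where "m = n - 2"
    have n: "n = m + 2" and "m \<ge> 2"
      using False by (auto simp: m_def)
    have "real n * r ^ (n + 1) = (real m + 2) * r ^ 2 * r ^ (m + 1)"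
      by (simp add: n power_add power2_eq_square algebra_simps)
    also have "\<dots> \<le> (real m + 2) * (1 / 2) * r ^ (m + 1)"
      using r by (intro mult_right_mono mult_left_mono) auto
    also have "\<dots> \<le> real m * r ^ (m + 1)"
      using \<open>m \<ge> 2\<close> r by (intro mult_right_mono) auto
    also have "\<dots> \<le> 3 / 4"
      using less n by simp
    finally show ?thesis .
  qed
qed

lemma Theta_nonneg:
  assumes t: "0 < t" "t \<le> pi / 4"
  shows "Theta j t \<ge> 0"
proof -
  define r where "r = abs_a t"
  have r: "0 \<le> r" "r ^ 2 \<le> 1 / 2"
    using t abs_a_ge_half[of t] abs_a_sq_le_half[of t] by (simp_all add: r_def)
  have s: "sin t > 0"
    using t by (intro sin_gt_zero) auto
  have "- (real j * sin t) \<le> sin (real j * t)"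
    using abs_sin_mult_le[of j t] s by linarith
  then have "r ^ (j + 1) * - (real j * sin t) \<le> r ^ (j + 1) * sin (real j * t)"
    using r by (intro mult_left_mono) auto
  then have "- (real j * r ^ (j + 1)) * sin t \<le> r ^ (j + 1) * sin (real j * t)"
    by (simp add: algebra_simps)
  moreover have "- (3 / 4) * sin t \<le> - (real j * r ^ (j + 1)) * sin t"
    using of_nat_mult_power_le[OF r, of j] s by (intro mult_right_mono) auto
  moreover have "3 / 4 * sin t \<le> (1 - r ^ 4) * sin t"
    using power4_le_quarter[OF r] s by (intro mult_right_mono) auto
  ultimately show ?thesis
    by (simp add: Theta_def r_def)
qed

lemma sin_le_minus_sin:
  assumes "0 \<le> t" "t \<le> pi / 2" "pi + t \<le> y" "y \<le> 2 * pi - t"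
  shows "sin y \<le> - sin t"
proof -
  have "sin t \<le> sin (y - pi)"
  proof (cases "y - pi \<le> pi / 2")
    case True
    then show ?thesis
      using assms by (intro sin_monotone_2pi_le) auto
  next
    case False
    have "sin t \<le> sin (2 * pi - y)"
      using assms False by (intro sin_monotone_2pi_le) auto
    then show ?thesis
      by (simp add: sin_diff)
  qed
  then show ?thesis
    by (simp add: sin_diff)
qed

lemma Psi_nonpos:
  assumes t: "0 < t" "t \<le> pi / 4" and "j \<ge> 3"
    and angle: "pi \<le> (real j - 1) * t" "(real j + 1) * t < 2 * pi"
  shows "Psi j t \<le> 0"
proof -
  define r where "r = abs_a t"
  have r: "0 \<le> r" "r ^ 2 \<le> 1 / 2" "r ^ j \<le> r ^ 3"
    using t abs_a_ge_half[of t] abs_a_sq_le_half[of t] abs_a_strict_mono[of t "pi / 3"]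
    by (auto simp: r_def intro!: power_decreasing \<open>j \<ge> 3\<close>)
  have "r ^ 4 \<le> 1 / 4"
    using power4_le_quarter r by blast
  then have "1 - r ^ 2 - r ^ 4 \<ge> 0"
    using r by simp
  moreover have "sin ((real j - 1) * t) \<le> 0"
    using angle t by (intro sin_le_zero) (auto simp: algebra_simps)
  moreover have "sin (real j * t) \<le> - sin t"
    using angle t by (intro sin_le_minus_sin) (auto simp: algebra_simps)
  moreover have "sin t > 0"
    using t by (intro sin_gt_zero) auto
  ultimately have "Psi j t \<le> 0 + r ^ 3 * (- sin t) + r ^ 3 * sin t"
    unfolding Psi_def r_def[symmetric] using r
    by (intro add_mono mult_nonneg_nonpos mult_left_mono mult_right_mono) auto
  then show ?thesis
    by simp
qed

lemma zz_ww_in_convex_hulls_small_angle: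
  assumes t: "0 < t" "t \<le> pi / 4" and "j \<ge> 3"
    and angle: "pi \<le> (real j - 1) * t" "(real j + 1) * t < 2 * pi"
  shows "zz t j \<in> convex hull {0, zz t (j - 1), ww t 1, 1}
       \<and> ww t j \<in> convex hull {1, ww t (j - 1), bb0 t, aa t}"
proof (rule zz_ww_in_convex_hulls)
  show "t < pi / 3"
    using t pi_gt_zero by linarith
  show "sin ((real j + 1) * t) \<le> 0"
    using angle t by (intro sin_le_zero) (auto simp: algebra_simps)
  show "Theta j t \<ge> 0" "Psi j t \<le> 0"
    using assms by (auto intro: Theta_nonneg Psi_nonpos)
qed (use assms in auto)

section \<open>The zero \<open>\<eta>\<^sub>m\<close> of \<open>\<Phi>\<^sub>m\<close> for \<open>m \<ge> 5\<close>\<close>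

lemma critical_interval_bounds:
  assumes m: "m \<ge> 5" and x: "pi / real m \<le> x" "x \<le> pi / (real m - 1)"
  shows "0 < x" "x \<le> pi / 4" "x < pi / 3" "pi \<le> real m * x" "(real m - 1) * x \<le> pi"
proof -
  have "pi / real m > 0"
    using m by simp
  then show "0 < x"
    using x by linarith
  have "pi / (real m - 1) \<le> pi / 4"
    using m by (intro divide_left_mono) auto
  then show "x \<le> pi / 4" "x < pi / 3"
    using x pi_gt_zero by linarith+
  show "pi \<le> real m * x" "(real m - 1) * x \<le> pi"
    using x m by (simp_all add: field_simps)
qed

definition Psi_ratio_tail :: "nat \<Rightarrow> real \<Rightarrow> real" where
  "Psi_ratio_tail m t = sin (real m * t) / sin t + abs_a t ^ (m - 3)"

text \<open>\<open>Psi_ratio m t\<close> is \<open>Psi m t / (abs_a t ^ 3 * sin t)\<close> split into a product of two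
  antitone nonnegative factors and a part with negative derivative on \<open>[\<pi>/m, \<pi>/(m-1)]\<close>.\<close>

definition Psi_ratio :: "nat \<Rightarrow> real \<Rightarrow> real" where
  "Psi_ratio m t = (1 - abs_a t ^ 2 - abs_a t ^ 4) / abs_a t ^ 3 * (sin ((real m - 1) * t) / sin t)
     + Psi_ratio_tail m t"

lemma Psi_eq_Psi_ratio:
  assumes "m \<ge> 3" "abs_a t \<noteq> 0" "sin t \<noteq> 0"
  shows "Psi m t = abs_a t ^ 3 * sin t * Psi_ratio m t"
proof -
  have "abs_a t ^ m = abs_a t ^ 3 * abs_a t ^ (m - 3)"
    using assms(1) by (simp add: power_add[symmetric])
  then show ?thesis
    using assms(2,3) by (simp add: Psi_def Psi_ratio_def Psi_ratio_tail_def field_simps)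
qed

lemma abs_a_deriv:
  assumes "cos x \<noteq> 0"
  shows "(abs_a has_real_derivative 2 * sin x / (2 * cos x) ^ 2) (at x)"
  unfolding abs_a_def[abs_def] using assms
  by (auto intro!: derivative_eq_intros simp: power2_eq_square)

lemma Psi_ratio_tail_deriv:
  assumes "m \<ge> 4" "cos x \<noteq> 0" "sin x \<noteq> 0"
  shows "(Psi_ratio_tail m has_real_derivative
     (real m * cos (real m * x) * sin x - sin (real m * x) * cos x) / sin x ^ 2
       + real (m - 3) * abs_a x ^ (m - 4) * (2 * sin x / (2 * cos x) ^ 2)) (at x)"
proof -
  have "m - 3 - Suc 0 = m - 4"
    by simp
  then show ?thesis
    unfolding Psi_ratio_tail_def[abs_def] using assms
    by (auto intro!: derivative_eq_intros abs_a_deriv simp: power2_eq_square field_simps)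
qed

lemma sin_quotient_deriv_numerator_le:
  assumes m: "m \<ge> 5" and x: "pi / real m \<le> x" "x \<le> pi / (real m - 1)"
  shows "real m * cos (real m * x) * sin x - sin (real m * x) * cos x \<le> - ((real m - 1) / 2 * sin x)"
proof -
  note bounds = critical_interval_bounds[OF m x]
  define y where "y = real m * x - pi"
  have y: "0 \<le> y" "y \<le> x"
    using bounds by (auto simp: y_def algebra_simps)
  have "cos (pi / 3) \<le> cos y"
    using y bounds by (intro cos_monotone_0_pi_le) auto
  then have "(real m - 1) * (1 / 2) * sin x \<le> (real m - 1) * cos y * sin x"
    using m bounds by (intro mult_right_mono mult_left_mono) (auto simp: cos_60 intro: sin_ge_zero)
  moreover have "sin (x - y) \<ge> 0"
    using y bounds by (intro sin_ge_zero) auto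
  moreover have "real m * cos (real m * x) * sin x - sin (real m * x) * cos x
      = - ((real m - 1) * cos y * sin x) - sin (x - y)"
    by (simp add: y_def cos_diff sin_diff algebra_simps)
  ultimately show ?thesis
    by simp
qed

lemma critical_interval_nonempty: "m \<ge> 5 \<Longrightarrow> pi / real m \<le> pi / (real m - 1)"
  by (intro divide_left_mono) auto

lemma Psi_ratio_tail_deriv_neg:
  assumes m: "m \<ge> 5" and x: "pi / real m \<le> x" "x \<le> pi / (real m - 1)"
  shows "(real m * cos (real m * x) * sin x - sin (real m * x) * cos x) / sin x ^ 2
       + real (m - 3) * abs_a x ^ (m - 4) * (2 * sin x / (2 * cos x) ^ 2) < 0"
proof -
  note bounds = critical_interval_bounds[OF m x]
  define r s where "r = abs_a x" and "s = sin x"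
  have s: "0 < s" "s \<le> 1"
    using bounds by (auto simp: s_def intro: sin_gt_zero)
  have r: "0 \<le> r" "r ^ 2 \<le> 1 / 2"
    using bounds abs_a_ge_half[of x] abs_a_sq_le_half[of x] by (simp_all add: r_def)
  have "(real m * cos (real m * x) * s - sin (real m * x) * cos x) / s ^ 2
      \<le> - ((real m - 1) / 2 * s) / s ^ 2"
    using sin_quotient_deriv_numerator_le[OF m x] s by (intro divide_right_mono) (auto simp: s_def)
  also have "\<dots> = - ((real m - 1) / 2) / s"
    using s by (simp add: power2_eq_square)
  also have "\<dots> \<le> - 2"
    using s m by (simp add: field_simps)
  finally have first: "(real m * cos (real m * x) * s - sin (real m * x) * cos x) / s ^ 2 \<le> - 2" .
  have "m - 3 + 1 = m - 4 + 2"
    using m by simp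
  then have "r ^ (m - 4) * r ^ 2 = r ^ (m - 3 + 1)"
    by (simp only: power_add)
  then have "real (m - 3) * r ^ (m - 4) * (2 * s / (2 * cos x) ^ 2)
      = 2 * (real (m - 3) * r ^ (m - 3 + 1)) * s"
    by (simp add: r_def s_def abs_a_def power_divide algebra_simps)
  also have "\<dots> \<le> 2 * (3 / 4) * 1"
    using of_nat_mult_power_le[OF r, of "m - 3"] s r by (intro mult_mono) auto
  finally show ?thesis
    using first unfolding r_def s_def by linarith
qed

lemma Psi_ratio_tail_strict_decreasing:
  assumes m: "m \<ge> 5" and "pi / real m \<le> s" "s < t" "t \<le> pi / (real m - 1)"
  shows "Psi_ratio_tail m t < Psi_ratio_tail m s"
proof (rule DERIV_neg_imp_decreasing[OF \<open>s < t\<close>])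
  fix x
  assume "s \<le> x" "x \<le> t"
  then have x: "pi / real m \<le> x" "x \<le> pi / (real m - 1)"
    using assms by auto
  note bounds = critical_interval_bounds[OF m x]
  have "cos x > 0" "sin x > 0"
    using bounds pi_gt_zero by (auto intro: cos_gt_zero_pi sin_gt_zero)
  then show "\<exists>y. (Psi_ratio_tail m has_real_derivative y) (at x) \<and> y < 0"
    using Psi_ratio_tail_deriv[of m x] Psi_ratio_tail_deriv_neg[OF m x] m by auto
qed

lemma abs_a_coefficient_antimono:
  assumes "0 < s" "s \<le> t" "t \<le> pi / 4"
  shows "(1 - abs_a t ^ 2 - abs_a t ^ 4) / abs_a t ^ 3 \<le> (1 - abs_a s ^ 2 - abs_a s ^ 4) / abs_a s ^ 3"
    and "0 \<le> (1 - abs_a t ^ 2 - abs_a t ^ 4) / abs_a t ^ 3"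
proof -
  have r: "0 < abs_a s" "abs_a s \<le> abs_a t" "abs_a t ^ 2 \<le> 1 / 2"
    using assms abs_a_ge_half[of s] abs_a_mono[of s t] abs_a_sq_le_half[of t] pi_gt_zero by auto
  have num: "0 \<le> 1 - abs_a t ^ 2 - abs_a t ^ 4"
    using power4_le_quarter[of "abs_a t"] r by simp
  have "abs_a s ^ 2 \<le> abs_a t ^ 2" "abs_a s ^ 4 \<le> abs_a t ^ 4"
    using r by (intro power_mono; simp)+
  then have "1 - abs_a t ^ 2 - abs_a t ^ 4 \<le> 1 - abs_a s ^ 2 - abs_a s ^ 4"
    by simp
  moreover have "abs_a s ^ 3 \<le> abs_a t ^ 3"
    using r by (intro power_mono) auto
  ultimately show "(1 - abs_a t ^ 2 - abs_a t ^ 4) / abs_a t ^ 3 \<le> (1 - abs_a s ^ 2 - abs_a s ^ 4) / abs_a s ^ 3"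
    using num r by (intro frac_le) auto
  show "0 \<le> (1 - abs_a t ^ 2 - abs_a t ^ 4) / abs_a t ^ 3"
    using num r by simp
qed

lemma sin_ratio_antimono:
  assumes m: "m \<ge> 5" and st: "pi / real m \<le> s" "s \<le> t" "t \<le> pi / (real m - 1)"
  shows "sin ((real m - 1) * t) / sin t \<le> sin ((real m - 1) * s) / sin s"
    and "0 \<le> sin ((real m - 1) * t) / sin t"
proof -
  note s_bounds = critical_interval_bounds[OF m st(1) order.trans[OF st(2,3)]]
  note t_bounds = critical_interval_bounds[OF m order.trans[OF st(1,2)] st(3)]
  have "pi / real m \<le> pi / 2"
    using m by (intro divide_left_mono) auto
  moreover have "(real m - 1) * s \<le> (real m - 1) * t"
    using m st by (intro mult_left_mono) auto
  ultimately have "sin (pi - (real m - 1) * t) \<le> sin (pi - (real m - 1) * s)"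
    using m st s_bounds t_bounds by (intro sin_monotone_2pi_le) (auto simp: field_simps)
  then have "sin ((real m - 1) * t) \<le> sin ((real m - 1) * s)"
    by simp
  moreover have "0 \<le> sin ((real m - 1) * t)"
    using t_bounds m by (intro sin_ge_zero) auto
  moreover have "0 < sin s" "sin s \<le> sin t"
    using s_bounds t_bounds st pi_gt_zero by (auto intro: sin_gt_zero sin_monotone_2pi_le)
  ultimately show "sin ((real m - 1) * t) / sin t \<le> sin ((real m - 1) * s) / sin s"
    and "0 \<le> sin ((real m - 1) * t) / sin t"
    by (auto intro: frac_le)
qed

lemma Psi_ratio_strict_decreasing:
  assumes m: "m \<ge> 5" and st: "pi / real m \<le> s" "s < t" "t \<le> pi / (real m - 1)"
  shows "Psi_ratio m t < Psi_ratio m s"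
proof -
  have "s \<le> pi / (real m - 1)" "pi / real m \<le> t"
    using st by auto
  note s_bounds = critical_interval_bounds[OF m st(1) this(1)]
    and t_bounds = critical_interval_bounds[OF m this(2) st(3)]
  have "(1 - abs_a t ^ 2 - abs_a t ^ 4) / abs_a t ^ 3 \<le> (1 - abs_a s ^ 2 - abs_a s ^ 4) / abs_a s ^ 3"
    "0 \<le> (1 - abs_a t ^ 2 - abs_a t ^ 4) / abs_a t ^ 3"
    using abs_a_coefficient_antimono[of s t] s_bounds t_bounds st by auto
  moreover have "sin ((real m - 1) * t) / sin t \<le> sin ((real m - 1) * s) / sin s"
    "0 \<le> sin ((real m - 1) * t) / sin t"
    using sin_ratio_antimono[OF m st(1) _ st(3)] st by auto
  ultimately have "(1 - abs_a t ^ 2 - abs_a t ^ 4) / abs_a t ^ 3 * (sin ((real m - 1) * t) / sin t)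
      \<le> (1 - abs_a s ^ 2 - abs_a s ^ 4) / abs_a s ^ 3 * (sin ((real m - 1) * s) / sin s)"
    by (intro mult_mono) auto
  then show ?thesis
    using Psi_ratio_tail_strict_decreasing[OF m st] by (simp add: Psi_ratio_def)
qed

lemma Psi_pos_at_pi_div:
  assumes m: "m \<ge> 5"
  shows "Psi m (pi / real m) > 0"
proof -
  define t where "t = pi / real m"
  have bounds: "0 < t" "t \<le> pi / 4"
    using critical_interval_bounds[OF m order.refl critical_interval_nonempty[OF m]]
    by (simp_all add: t_def)
  have "(real m - 1) * t = pi - t" "real m * t = pi"
    using m by (simp_all add: t_def field_simps)
  then have "Psi m t = (1 - abs_a t ^ 2 - abs_a t ^ 4 + abs_a t ^ m) * sin t"
    by (simp add: Psi_def algebra_simps)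
  also have "\<dots> > 0"
    using bounds power4_le_quarter[of "abs_a t"] abs_a_ge_half[of t] abs_a_sq_le_half[of t]
    by (intro mult_pos_pos add_pos_nonneg sin_gt_zero) auto
  finally show ?thesis
    by (simp add: t_def)
qed

lemma Psi_neg_at_pi_div_pred:
  assumes m: "m \<ge> 5"
  shows "Psi m (pi / (real m - 1)) < 0"
proof -
  define t where "t = pi / (real m - 1)"
  have bounds: "0 < t" "t \<le> pi / 4"
    using critical_interval_bounds[OF m critical_interval_nonempty[OF m] order.refl]
    by (simp_all add: t_def)
  have "(real m - 1) * t = pi" "real m * t = t + pi"
    using m by (simp_all add: t_def field_simps)
  then have "Psi m t = (abs_a t ^ m - abs_a t ^ 3) * sin t"
    by (simp add: Psi_def algebra_simps)
  also have "\<dots> < 0"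
    using bounds m abs_a_ge_half[of t] abs_a_strict_mono[of t "pi / 3"]
    by (intro mult_neg_pos sin_gt_zero) (auto intro: power_strict_decreasing)
  finally show ?thesis
    by (simp add: t_def)
qed

lemma Psi_ratio_continuous_on:
  assumes "m \<ge> 5"
  shows "continuous_on {pi / real m .. pi / (real m - 1)} (Psi_ratio m)"
proof -
  have "cos x \<noteq> 0" "sin x \<noteq> 0" if "x \<in> {pi / real m .. pi / (real m - 1)}" for x
    using that bounds_below_pi_div_3[OF critical_interval_bounds(1,3)[OF assms, of x]] by auto
  then show ?thesis
    unfolding Psi_ratio_def[abs_def] Psi_ratio_tail_def abs_a_def
    by (intro continuous_intros) auto
qed

lemma ex1_zero_of_strict_decreasing:
  fixes g :: "real \<Rightarrow> real"
  assumes "a \<le> b" and "continuous_on {a..b} g"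
    and dec: "\<And>x y. a \<le> x \<Longrightarrow> x < y \<Longrightarrow> y \<le> b \<Longrightarrow> g y < g x"
    and "g a > 0" "g b < 0"
  shows "\<exists>!x. x \<in> {a<..<b} \<and> g x = 0"
proof -
  obtain x where "a \<le> x" "x \<le> b" "g x = 0"
    using IVT2'[of g b 0 a] assms by auto
  moreover have "x \<noteq> a" "x \<noteq> b"
    using assms \<open>g x = 0\<close> by auto
  moreover have "y = x" if "y \<in> {a<..<b}" "g y = 0" for y
    using dec[of x y] dec[of y x] that \<open>a \<le> x\<close> \<open>x \<le> b\<close> \<open>g x = 0\<close> by (cases x y rule: linorder_cases) auto
  ultimately show ?thesis
    by (intro ex1I[of _ x]) auto
qed

lemma eta_k_zero_of:
  assumes "\<And>x. x \<in> {pi / real m <..< pi / (real m - 1)} \<Longrightarrow> Phi m x = 0 \<longleftrightarrow> g x = 0"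
    and "\<exists>!x. x \<in> {pi / real m <..< pi / (real m - 1)} \<and> g x = 0"
  shows "eta_k m \<in> {pi / real m <..< pi / (real m - 1)}" "g (eta_k m) = 0"
proof -
  have "\<exists>!x. x \<in> {pi / real m <..< pi / (real m - 1)} \<and> Phi m x = 0"
    using assms by metis
  then have "eta_k m \<in> {pi / real m <..< pi / (real m - 1)} \<and> Phi m (eta_k m) = 0"
    unfolding eta_k_def by (rule theI')
  then show "eta_k m \<in> {pi / real m <..< pi / (real m - 1)}" "g (eta_k m) = 0"
    using assms(1) by auto
qed

lemma eta_k_ge_5:
  assumes m: "m \<ge> 5"
  shows "eta_k m \<in> {pi / real m <..< pi / (real m - 1)}" "Psi_ratio m (eta_k m) = 0"
proof -
  note I = critical_interval_nonempty[OF m]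
  have pos: "cos x > 0" "abs_a x ^ 3 * sin x > 0"
    and ratio: "Psi_ratio m x = Psi m x / (abs_a x ^ 3 * sin x)"
    if "pi / real m \<le> x" "x \<le> pi / (real m - 1)" for x
    using bounds_below_pi_div_3[OF critical_interval_bounds(1,3)[OF m that]] Psi_eq_Psi_ratio[of m x] m
    by simp_all
  have "Psi_ratio m (pi / real m) > 0"
    using Psi_pos_at_pi_div[OF m] ratio[OF order.refl I] pos(2)[OF order.refl I] by simp
  moreover have "Psi_ratio m (pi / (real m - 1)) < 0"
    using Psi_neg_at_pi_div_pred[OF m] ratio[OF I order.refl] pos(2)[OF I order.refl]
    by (simp add: divide_neg_pos)
  ultimately have "\<exists>!x. x \<in> {pi / real m <..< pi / (real m - 1)} \<and> Psi_ratio m x = 0"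
    using I Psi_ratio_continuous_on[OF m] Psi_ratio_strict_decreasing[OF m]
    by (intro ex1_zero_of_strict_decreasing)
  moreover have "Phi m x = 0 \<longleftrightarrow> Psi_ratio m x = 0"
    if "x \<in> {pi / real m <..< pi / (real m - 1)}" for x
  proof -
    have x: "pi / real m \<le> x" "x \<le> pi / (real m - 1)"
      using that by auto
    show ?thesis
      using Phi_eq_Psi[OF pos(1)[OF x]] ratio[OF x] pos(2)[OF x] by auto
  qed
  ultimately show "eta_k m \<in> {pi / real m <..< pi / (real m - 1)}" "Psi_ratio m (eta_k m) = 0"
    using eta_k_zero_of[of m "Psi_ratio m"] by blast+
qed

lemma Psi_nonpos_right_of_eta_k:
  assumes m: "m \<ge> 5" and t: "eta_k m \<le> t" "t \<le> pi / (real m - 1)"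
  shows "Psi m t \<le> 0"
proof -
  note eta = eta_k_ge_5[OF m]
  have t': "pi / real m \<le> t"
    using eta t by auto
  note bounds = bounds_below_pi_div_3[OF critical_interval_bounds(1,3)[OF m t' t(2)]]
  have "Psi_ratio m t \<le> 0"
    using Psi_ratio_strict_decreasing[OF m, of "eta_k m" t] eta t by (cases "t = eta_k m") auto
  moreover have "Psi m t = abs_a t ^ 3 * sin t * Psi_ratio m t"
    using bounds m by (intro Psi_eq_Psi_ratio) auto
  ultimately show ?thesis
    using bounds by (simp add: mult_nonneg_nonpos)
qed

section \<open>The case \<open>k = 4\<close>\<close>

lemma sin_small_multiples:
  fixes t :: real
  shows "sin (2 * t) = 2 * cos t * sin t"
    "sin (3 * t) = 2 * cos t * sin (2 * t) - sin t"
    "sin (4 * t) = 2 * cos t * sin (3 * t) - sin (2 * t)"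
    "sin (5 * t) = 2 * cos t * sin (4 * t) - sin (3 * t)"
  using sin_mult_recurrence[of 1 t] sin_mult_recurrence[of 2 t] sin_mult_recurrence[of 3 t]
    sin_mult_recurrence[of 4 t]
  by (simp_all add: algebra_simps)

lemma Psi_4_factor:
  assumes "cos t \<noteq> 0"
  shows "abs_a t ^ 2 * Psi 4 t = sin t * (1 - abs_a t ^ 2) * (1 - 2 * abs_a t ^ 4)"
proof -
  have "abs_a t * (2 * cos t) = 1"
    using assms by (simp add: abs_a_def)
  moreover have "Psi 4 t = (1 - abs_a t ^ 2 - abs_a t ^ 4) * sin (3 * t)
      + abs_a t ^ 3 * sin (4 * t) + abs_a t ^ 4 * sin t"
    by (simp add: Psi_def)
  ultimately show ?thesis
    unfolding sin_small_multiples by algebra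
qed

lemma Phi_4_eq_0_iff:
  assumes "pi / 4 < t" "t < pi / 3"
  shows "Phi 4 t = 0 \<longleftrightarrow> abs_a t ^ 4 = 1 / 2"
proof -
  have b: "cos t > 0" "sin t > 0" "abs_a t > 0" "abs_a t < 1"
    using bounds_below_pi_div_3[of t] assms pi_gt_zero by linarith+
  then have "abs_a t ^ 2 < 1"
    by (simp add: power_less_one_iff)
  have "Phi 4 t = 0 \<longleftrightarrow> abs_a t ^ 2 * Psi 4 t = 0"
    using Phi_eq_Psi[OF b(1)] b(3) by simp
  also have "\<dots> \<longleftrightarrow> 1 - 2 * abs_a t ^ 4 = 0"
    using Psi_4_factor[of t] b \<open>abs_a t ^ 2 < 1\<close> by simp
  finally show ?thesis
    by auto
qed

lemma ex1_abs_a_power_4_eq_half: "\<exists>!t. t \<in> {pi / 4 <..< pi / 3} \<and> 1 / 2 - abs_a t ^ 4 = 0"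
proof (rule ex1_zero_of_strict_decreasing)
  have "cos t \<noteq> 0" if "t \<in> {pi / 4 .. pi / 3}" for t
  proof -
    have "pi / 4 \<le> t" "t \<le> pi / 3"
      using that by auto
    then have "- (pi / 2) < t" "t < pi / 2"
      using pi_gt_zero by linarith+
    then show ?thesis
      using cos_gt_zero_pi[of t] by simp
  qed
  then show "continuous_on {pi / 4 .. pi / 3} (\<lambda>t. 1 / 2 - abs_a t ^ 4)"
    unfolding abs_a_def by (intro continuous_intros) auto
  show "1 / 2 - abs_a y ^ 4 < 1 / 2 - abs_a x ^ 4"
    if "pi / 4 \<le> x" "x < y" "y \<le> pi / 3" for x y
  proof -
    have "0 \<le> x" "y < pi / 2"
      using that pi_gt_zero by linarith+
    then have "abs_a x ^ 4 < abs_a y ^ 4"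
      using that abs_a_strict_mono[of x y] abs_a_ge_half[of x] by (intro power_strict_mono) auto
    then show ?thesis
      by simp
  qed
  have "abs_a (pi / 4) ^ 4 = (abs_a (pi / 4) ^ 2) ^ 2"
    unfolding power_mult[symmetric] by simp
  then show "1 / 2 - abs_a (pi / 4) ^ 4 > 0"
    unfolding abs_a_pi_div_4_sq by (simp add: power2_eq_square)
qed simp_all

lemma eta_k_4: "eta_k 4 \<in> {pi / 4 <..< pi / 3}" "abs_a (eta_k 4) ^ 4 = 1 / 2"
proof -
  have "{pi / real 4 <..< pi / (real 4 - 1)} = {pi / 4 <..< pi / 3}"
    by simp
  then show "eta_k 4 \<in> {pi / 4 <..< pi / 3}" "abs_a (eta_k 4) ^ 4 = 1 / 2"
    using eta_k_zero_of[of 4 "\<lambda>t. 1 / 2 - abs_a t ^ 4"] Phi_4_eq_0_iff ex1_abs_a_power_4_eq_half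
    by auto
qed

lemma abs_a_power_4_lt_half:
  assumes "pi / 4 \<le> t" "t < eta_k 4"
  shows "abs_a t ^ 4 < 1 / 2"
proof -
  have "abs_a t ^ 4 < abs_a (eta_k 4) ^ 4"
    using assms eta_k_4(1) abs_a_strict_mono[of t "eta_k 4"] abs_a_ge_half[of t] pi_gt_zero
    by (intro power_strict_mono) auto
  then show ?thesis
    using eta_k_4(2) by simp
qed

lemma Theta_5_eq:
  assumes "cos t \<noteq> 0"
  shows "Theta 5 t = sin t * (1 + abs_a t ^ 2 - 4 * (abs_a t ^ 2) ^ 2 + (abs_a t ^ 2) ^ 3)"
proof -
  have "abs_a t * (2 * cos t) = 1"
    using assms by (simp add: abs_a_def)
  moreover have "Theta 5 t = abs_a t ^ 6 * sin (5 * t) + (1 - abs_a t ^ 4) * sin t"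
    by (simp add: Theta_def)
  ultimately show ?thesis
    unfolding sin_small_multiples by algebra
qed

lemma Psi_5_eq:
  assumes "cos t \<noteq> 0"
  shows "abs_a t ^ 3 * Psi 5 t
    = sin t * (1 - 2 * abs_a t ^ 2 - 2 * (abs_a t ^ 2) ^ 2 + 3 * (abs_a t ^ 2) ^ 3 + (abs_a t ^ 2) ^ 4)"
proof -
  have "abs_a t * (2 * cos t) = 1"
    using assms by (simp add: abs_a_def)
  moreover have "Psi 5 t = (1 - abs_a t ^ 2 - abs_a t ^ 4) * sin (4 * t)
      + abs_a t ^ 3 * sin (5 * t) + abs_a t ^ 5 * sin t"
    by (simp add: Psi_def)
  ultimately show ?thesis
    unfolding sin_small_multiples by algebra
qed

text \<open>Here \<open>q\<^sup>2 < 1/2\<close> gives \<open>q \<le> 0.71\<close>, and in \<open>d = q - 1/2 \<in> [0, 0.21]\<close> the polynomials are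
  bounded term by term.\<close>

lemma Theta_5_poly_nonneg:
  fixes q :: real
  assumes "1 / 2 \<le> q" "q ^ 2 < 1 / 2"
  shows "1 + q - 4 * q ^ 2 + q ^ 3 \<ge> 0"
proof -
  define d where "d = q - 1 / 2"
  have d: "0 \<le> d" "d \<le> 21 / 100"
    using assms power2_le_imp_le[of q "71 / 100"] by (simp_all add: d_def power2_eq_square)
  have "d * d \<le> 21 / 100 * d"
    by (rule mult_right_mono[OF d(2) d(1)])
  moreover have "0 \<le> d * d * d"
    using d by simp
  moreover have "1 + q - 4 * q ^ 2 + q ^ 3 = 5 / 8 - 9 / 4 * d - 5 / 2 * (d * d) + d * d * d"
    by (simp add: d_def power2_eq_square power3_eq_cube field_simps)
  ultimately show ?thesis
    using d by linarith
qed

lemma Psi_5_poly_nonpos: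
  fixes q :: real
  assumes "1 / 2 \<le> q" "q ^ 2 < 1 / 2"
  shows "1 - 2 * q - 2 * q ^ 2 + 3 * q ^ 3 + q ^ 4 \<le> 0"
proof -
  define d where "d = q - 1 / 2"
  have d: "0 \<le> d" "d \<le> 21 / 100"
    using assms power2_le_imp_le[of q "71 / 100"] by (simp_all add: d_def power2_eq_square)
  have "d * d \<le> 21 / 100 * d"
    by (rule mult_right_mono[OF d(2) d(1)])
  moreover have "d * d * d \<le> d * d * (21 / 100)" "d * d * d * d \<le> d * d * d * (21 / 100)"
    using d by (intro mult_left_mono; simp)+
  moreover have "1 - 2 * q - 2 * q ^ 2 + 3 * q ^ 3 + q ^ 4
      = - 1 / 16 - 5 / 4 * d + 4 * (d * d) + 5 * (d * d * d) + d * d * d * d"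
    by (simp add: d_def power2_eq_square power3_eq_cube power4_eq_xxxx field_simps)
  ultimately show ?thesis
    using d by linarith
qed

lemma zz_ww_in_convex_hulls_5_before_eta_k_4:
  assumes t: "pi / 4 \<le> t" "t < eta_k 4"
  shows "zz t 5 \<in> convex hull {0, zz t (5 - 1), ww t 1, 1}
       \<and> ww t 5 \<in> convex hull {1, ww t (5 - 1), bb0 t, aa t}"
proof -
  have t3: "t < pi / 3"
    using t eta_k_4(1) by auto
  have t0: "0 < t"
    using t pi_gt_zero by linarith
  note bounds = bounds_below_pi_div_3[OF t0 t3]
  define q where "q = abs_a t ^ 2"
  have "t < pi / 2"
    using t3 pi_gt_zero by linarith
  then have q: "1 / 2 \<le> q" "q ^ 2 < 1 / 2"
    using abs_a_sq_ge_half[OF t(1)] abs_a_power_4_lt_half[OF t]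
    by (simp_all add: q_def flip: power_mult)
  show ?thesis
  proof (rule zz_ww_in_convex_hulls[OF t0 t3])
    show "sin ((real 5 + 1) * t) \<le> 0"
      using t t3 by (intro sin_le_zero) auto
    show "Theta 5 t \<ge> 0"
      using Theta_5_eq[of t] Theta_5_poly_nonneg[OF q] bounds by (simp add: q_def)
    have "abs_a t ^ 3 * Psi 5 t \<le> 0"
      using Psi_5_eq[of t] Psi_5_poly_nonpos[OF q] bounds
      by (simp add: q_def mult_nonneg_nonpos)
    then show "Psi 5 t \<le> 0"
      using bounds by (simp add: mult_le_0_iff)
  qed simp
qed

section \<open>The cases (C1) and (C2)\<close>

lemma zz_ww_in_convex_hulls_before_eta_k:
  assumes k: "k \<ge> 5" and t: "pi / real k \<le> t" "t < eta_k k"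
    and j: "k + 1 \<le> j" "j \<le> 2 * k - 3"
  shows "zz t j \<in> convex hull {0, zz t (j - 1), ww t 1, 1}
       \<and> ww t j \<in> convex hull {1, ww t (j - 1), bb0 t, aa t}"
proof -
  have tk: "t < pi / (real k - 1)"
    using eta_k_ge_5(1)[OF k] t by auto
  note bounds = critical_interval_bounds[OF k t(1) less_imp_le[OF tk]]
  have "real k + 1 \<le> real j" "real j + 3 \<le> 2 * real k"
    using j k by linarith+
  show ?thesis
  proof (rule zz_ww_in_convex_hulls_small_angle)
    have "real k * t \<le> (real j - 1) * t"
      using bounds \<open>real k + 1 \<le> real j\<close> by (intro mult_right_mono) auto
    then show "pi \<le> (real j - 1) * t"
      using bounds by linarith
    have "(real j + 1) * t \<le> (2 * real k - 2) * t"
      using bounds \<open>real j + 3 \<le> 2 * real k\<close> by (intro mult_right_mono) auto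
    moreover have "(real k - 1) * t < pi"
      using tk k by (simp add: field_simps)
    ultimately show "(real j + 1) * t < 2 * pi"
      by (simp add: algebra_simps)
  qed (use bounds j k in auto)
qed

lemma bounds_after_eta_k_succ:
  assumes k: "k \<ge> 4" and t: "eta_k (k + 1) \<le> t" "t < pi / real k"
  shows "0 < t" "t \<le> pi / 4" "pi < (real k + 1) * t" "real k * t < pi"
proof -
  have "pi / (real k + 1) < t"
    using eta_k_ge_5(1)[of "k + 1"] k t by (simp add: add.commute)
  moreover have "0 < pi / (real k + 1)" "pi / real k \<le> pi / 4"
    using k by (simp, intro divide_left_mono) auto
  ultimately show "0 < t" "t \<le> pi / 4"
    using t by linarith+
  show "pi < (real k + 1) * t"
    using \<open>pi / (real k + 1) < t\<close> by (simp add: field_simps)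
  show "real k * t < pi"
    using t k by (simp add: field_simps)
qed

lemma zz_ww_in_convex_hulls_after_eta_k_succ:
  assumes k: "k \<ge> 4" and t: "eta_k (k + 1) \<le> t" "t < pi / real k"
    and j: "k + 1 \<le> j" "j \<le> 2 * k - 1"
  shows "zz t j \<in> convex hull {0, zz t (j - 1), ww t 1, 1}
       \<and> ww t j \<in> convex hull {1, ww t (j - 1), bb0 t, aa t}"
proof -
  note bounds = bounds_after_eta_k_succ[OF k t]
  have "real k + 1 \<le> real j" "real j + 1 \<le> 2 * real k"
    using j k by linarith+
  then have "(real j + 1) * t \<le> 2 * (real k * t)"
    using bounds by (simp add: mult_right_mono)
  then have upper: "(real j + 1) * t < 2 * pi"
    using bounds by linarith
  show ?thesis
  proof (cases "j = k + 1")
    case True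
    have "Psi (k + 1) t \<le> 0"
      using Psi_nonpos_right_of_eta_k[of "k + 1" t] k t by simp
    moreover have "pi \<le> (real j + 1) * t"
      using bounds True by (simp add: algebra_simps)
    ultimately show ?thesis
      using True bounds upper pi_gt_zero
      by (intro zz_ww_in_convex_hulls sin_le_zero Theta_nonneg) auto
  next
    case False
    then have "(real k + 1) * t \<le> (real j - 1) * t"
      using j bounds by (intro mult_right_mono) auto
    then have "pi \<le> (real j - 1) * t"
      using bounds by linarith
    then show ?thesis
      using j k bounds upper by (intro zz_ww_in_convex_hulls_small_angle) auto
  qed
qed

theorem lemma5p3:
  fixes k j :: nat and \<eta> :: real
  assumes "k \<ge> 4"
    and "(\<eta> \<in> {pi / real k ..< eta_k k} \<and> j \<in> {k+1 .. 2*k-3})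
         \<or> (\<eta> \<in> {eta_k (k+1) ..< pi / real k} \<and> j \<in> {k+1 .. 2*k-1})"
  shows "zz \<eta> j \<in> convex hull {0, zz \<eta> (j - 1), ww \<eta> 1, 1}
       \<and> ww \<eta> j \<in> convex hull {1, ww \<eta> (j - 1), bb0 \<eta>, aa \<eta>}"
  using assms(2)
proof (elim disjE conjE)
  assume \<eta>: "\<eta> \<in> {pi / real k ..< eta_k k}" and j: "j \<in> {k+1 .. 2*k-3}"
  show ?thesis
  proof (cases "k = 4")
    case True
    then have "j = 5"
      using j by auto
    then show ?thesis
      using zz_ww_in_convex_hulls_5_before_eta_k_4[of \<eta>] \<eta> True by simp
  next
    case False
    then show ?thesis
      using zz_ww_in_convex_hulls_before_eta_k[of k \<eta> j] assms(1) \<eta> j by auto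
  qed
next
  assume "\<eta> \<in> {eta_k (k+1) ..< pi / real k}" and "j \<in> {k+1 .. 2*k-1}"
  then show ?thesis
    using zz_ww_in_convex_hulls_after_eta_k_succ[OF assms(1)] by auto
qed

end
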